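(* Let $H$ be an $n\times(n-1)$ unreduced upper Hessenberg $0/1$-matrix whose columns together with the origin form an acute $(n-1)$-simplex in $[0,1]^n$. Then there exist at most two $(n+1)\times n$ unreduced upper Hessenberg $0/1$-matrices whose columns together with the origin form an acute $n$-simplex in $[0,1]^{n+1}$ and whose top left $n\times(n-1)$ submatrix equals $H$.
   Context: An $m\times p$ matrix $A=(a_{ij})$ is unreduced upper Hessenberg if $a_{ij}=0$ whenever $i>j+1$ and $a_{j+1,j}\neq0$ for all $j$. The columns $p_1,\dots,p_j$ of a $0/1$-matrix $P$ together with the origin form an acute $j$-simplex if $G=P^\top P$ is invertible, every off-diagonal entry of $G^{-1}$ is negative and every row sum of $G^{-1}$ is positive (equivalently, all dihedral angles of the simplex are acute). *)

theory Defs
  imports "Jordan_Normal_Form.Matrix"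
begin

text \<open>Matrices are Jordan_Normal_Form matrices (dimensions carried by the value),
  indices are 0-based.\<close>

definition zero_one_mat :: "real mat \<Rightarrow> bool" where
  "zero_one_mat A \<longleftrightarrow> (\<forall>i < dim_row A. \<forall>j < dim_col A. A $$ (i,j) = 0 \<or> A $$ (i,j) = 1)"

definition unreduced_upper_hessenberg :: "real mat \<Rightarrow> bool" where
  "unreduced_upper_hessenberg A \<longleftrightarrow>
     (\<forall>i < dim_row A. \<forall>j < dim_col A. i > j + 1 \<longrightarrow> A $$ (i,j) = 0) \<and>
     (\<forall>j < dim_col A. j + 1 < dim_row A \<longrightarrow> A $$ (j+1, j) \<noteq> 0)"

text \<open>The columns of P together with the origin form an acute simplex:
  G = P^T P is invertible, every off-diagonal entry of G^{-1} is negative and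
  every row sum of G^{-1} is positive.\<close>
definition acute_simplex :: "real mat \<Rightarrow> bool" where
  "acute_simplex P \<longleftrightarrow>
     (let G = transpose_mat P * P; k = dim_col P in
        invertible_mat G \<and>
        (\<exists>Gi \<in> carrier_mat k k. inverts_mat G Gi \<and> inverts_mat Gi G \<and>
           (\<forall>i < k. \<forall>j < k. i \<noteq> j \<longrightarrow> Gi $$ (i,j) < 0) \<and>
           (\<forall>i < k. (\<Sum>j<k. Gi $$ (i,j)) > 0)))"

end

theory Submission
  imports Defs
begin

text \<open>If \<open>G\<close> is the Gram matrix of an acute simplex, then \<open>G\<^sup>-\<^sup>1\<close> has negative off-diagonal
  entries and positive row sums, and a minimum/maximum argument on \<open>G\<^sup>-\<^sup>1 y = e\<^sub>k\<close> shows that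
  every column of \<open>G\<close> is positive with its diagonal entry strictly largest. For \<open>0/1\<close> columns
  this says that any two columns share a \<open>1\<close>, and that each column has a \<open>1\<close> where any other
  column has a \<open>0\<close>. In an unreduced Hessenberg \<open>0/1\<close> matrix these two facts force, by induction
  on \<open>j\<close>, that on the rows \<open>0..j\<close> column \<open>j\<close> marks exactly those rows where the last column
  differs from its entry in row \<open>j+1\<close>. Hence the last column is determined by the preceding
  columns together with its top entry, which leaves at most two possibilities.\<close>

lemma Z_matrix_unit_vec_solution_pos_max:
  fixes M :: "real mat" and y :: "real vec"
  assumes M: "M \<in> carrier_mat m m" and y: "y \<in> carrier_vec m"
    and off_diag: "\<And>i j. i < m \<Longrightarrow> j < m \<Longrightarrow> i \<noteq> j \<Longrightarrow> M $$ (i,j) < 0"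
    and row_sum: "\<And>i. i < m \<Longrightarrow> 0 < (\<Sum>j<m. M $$ (i,j))"
    and sol: "M *\<^sub>v y = unit_vec m k" and k: "k < m" and i: "i < m"
  shows "0 < y $ i" and "i \<noteq> k \<Longrightarrow> y $ i < y $ k"
proof -
  \<comment> \<open>At a minimum (maximum) of \<open>y\<close> all terms \<open>t i l\<close> are \<open>\<ge> 0\<close> (\<open>\<le> 0\<close>).\<close>
  define t where "t i l = M $$ (i,l) * (y $ i - y $ l)" for i l
  define d where "d i = (\<Sum>l<m. t i l)" for i
  have balance: "(if i = k then 1 else 0) = (\<Sum>l<m. M $$ (i,l)) * y $ i - d i" if "i < m" for i
  proof -
    have "(if i = k then 1 else 0) = (M *\<^sub>v y) $ i" using sol that k by simp
    also have "\<dots> = (\<Sum>l<m. M $$ (i,l) * y $ l)"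
      using M y that by (simp add: scalar_prod_def lessThan_atLeast0)
    also have "\<dots> = (\<Sum>l<m. M $$ (i,l)) * y $ i - d i"
      by (simp add: d_def t_def algebra_simps sum_subtractf sum_distrib_left)
    finally show ?thesis .
  qed
  have t_nonneg: "0 \<le> t i l" if "i < m" "l < m" "y $ i \<le> y $ l" for i l
    using off_diag[of i l] that by (cases "l = i") (auto simp: t_def mult_nonpos_nonpos)
  have t_nonpos: "t i l \<le> 0" if "i < m" "l < m" "y $ l \<le> y $ i" for i l
    using off_diag[of i l] that by (cases "l = i") (auto simp: t_def mult_nonpos_nonneg)
  obtain i0 where i0: "i0 < m" "\<And>l. l < m \<Longrightarrow> y $ i0 \<le> y $ l"
    using ex_is_arg_min_if_finite[of "{..<m}" "\<lambda>l. y $ l"] k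
    by (auto simp: is_arg_min_linorder)
  have min_pos: "0 < y $ i0"
  proof (rule ccontr)
    assume "\<not> 0 < y $ i0"
    then have nonpos: "(\<Sum>l<m. M $$ (j,l)) * y $ i0 \<le> 0" if "j < m" for j
      using row_sum[OF that] by (simp add: mult_nonneg_nonpos)
    have "y $ k = y $ i0"
    proof (cases "i0 = k")
      case False
      have "d i0 \<le> 0"
        using balance[OF i0(1)] False nonpos[OF i0(1)] by simp
      moreover have "\<forall>l\<in>{..<m}. 0 \<le> t i0 l" using t_nonneg i0 by simp
      ultimately have "\<forall>l\<in>{..<m}. t i0 l = 0"
        using sum_nonneg_eq_0_iff[of "{..<m}" "t i0"] sum_nonneg[of "{..<m}" "t i0"]
        by (auto simp: d_def)
      then have "M $$ (i0,k) * (y $ i0 - y $ k) = 0" using k by (simp add: t_def)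
      then show ?thesis using off_diag[of i0 k] False i0(1) k by simp
    qed simp
    then have "0 \<le> d k" using t_nonneg i0 k by (auto simp: d_def intro: sum_nonneg)
    then show False
      using balance[OF k] nonpos[OF k] \<open>y $ k = y $ i0\<close> by simp
  qed
  then show "0 < y $ i" using i0(2)[OF i] by simp
  show "y $ i < y $ k" if "i \<noteq> k"
  proof (rule ccontr)
    assume "\<not> y $ i < y $ k"
    obtain i2 where i2: "i2 < m" "i2 \<noteq> k" "\<And>l. l < m \<Longrightarrow> l \<noteq> k \<Longrightarrow> y $ l \<le> y $ i2"
      using ex_is_arg_min_if_finite[of "{..<m} - {k}" "\<lambda>l. - y $ l"] i \<open>i \<noteq> k\<close>
      by (auto simp: is_arg_min_linorder)
    have "y $ l \<le> y $ i2" if "l < m" for l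
      using i2(3)[OF that] i2(3)[OF i \<open>i \<noteq> k\<close>] \<open>\<not> y $ i < y $ k\<close> by (cases "l = k") auto
    then have "d i2 \<le> 0" using t_nonpos i2(1) by (auto simp: d_def intro: sum_nonpos)
    moreover have "0 < (\<Sum>l<m. M $$ (i2,l)) * y $ i2"
      using row_sum[OF i2(1)] min_pos i0(2)[OF i2(1)] by simp
    ultimately show False using balance[OF i2(1)] i2(2) by simp
  qed
qed

lemma acute_simplex_col_scalar_prod:
  assumes P: "P \<in> carrier_mat m k" and acute: "acute_simplex P" and i: "i < k" and j: "j < k"
  shows "0 < col P i \<bullet> col P j" and "i \<noteq> j \<Longrightarrow> col P i \<bullet> col P j < col P j \<bullet> col P j"
proof -
  define G where "G = transpose_mat P * P"
  have G: "G \<in> carrier_mat k k" using P by (simp add: G_def)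
  obtain Gi where Gi: "Gi \<in> carrier_mat k k" "inverts_mat Gi G"
      "\<And>i j. i < k \<Longrightarrow> j < k \<Longrightarrow> i \<noteq> j \<Longrightarrow> Gi $$ (i,j) < 0"
      "\<And>i. i < k \<Longrightarrow> 0 < (\<Sum>j<k. Gi $$ (i,j))"
    using acute P unfolding acute_simplex_def Let_def G_def by auto
  have "Gi *\<^sub>v col G j = col (Gi * G) j" by (rule col_mult2[OF Gi(1) G j, symmetric])
  also have "\<dots> = unit_vec k j" using Gi(1,2) j by (simp add: inverts_mat_def)
  finally have sol: "Gi *\<^sub>v col G j = unit_vec k j" .
  have G_entry: "col G j $ l = col P l \<bullet> col P j" if "l < k" for l
    using P that j by (simp add: G_def)
  show "0 < col P i \<bullet> col P j" "i \<noteq> j \<Longrightarrow> col P i \<bullet> col P j < col P j \<bullet> col P j"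
    using Z_matrix_unit_vec_solution_pos_max[OF Gi(1) _ Gi(3,4) sol j i] G j G_entry i by auto
qed

lemma zero_one_scalar_prod_pos_witness:
  fixes u v :: "real vec"
  assumes "v \<in> carrier_vec m" "\<And>r. r < m \<Longrightarrow> u $ r \<in> {0,1}" "\<And>r. r < m \<Longrightarrow> v $ r \<in> {0,1}"
    and "0 < u \<bullet> v"
  shows "\<exists>r<m. u $ r = 1 \<and> v $ r = 1"
proof (rule ccontr)
  assume "\<not> ?thesis"
  then have "u $ r * v $ r = 0" if "r < m" for r using assms(2,3)[OF that] that by auto
  then have "u \<bullet> v = 0" using assms(1) by (simp add: scalar_prod_def sum.neutral)
  with assms(4) show False by simp
qed

lemma zero_one_scalar_prod_less_witness:
  fixes u v :: "real vec"
  assumes "v \<in> carrier_vec m" "\<And>r. r < m \<Longrightarrow> u $ r \<in> {0,1}" "\<And>r. r < m \<Longrightarrow> v $ r \<in> {0,1}"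
    and "u \<bullet> v < v \<bullet> v"
  shows "\<exists>r<m. v $ r = 1 \<and> u $ r = 0"
proof (rule ccontr)
  assume "\<not> ?thesis"
  then have "u $ r * v $ r = v $ r * v $ r" if "r < m" for r using assms(2,3)[OF that] that by auto
  then have "u \<bullet> v = v \<bullet> v" using assms(1) by (auto simp: scalar_prod_def intro!: sum.cong)
  with assms(4) show False by simp
qed

lemma acute_zero_one_columns_overlap:
  assumes P: "P \<in> carrier_mat m k" and "zero_one_mat P" and acute: "acute_simplex P"
    and i: "i < k" and j: "j < k" and "i \<noteq> j"
  shows "\<exists>r<m. P $$ (r,i) = 1 \<and> (P $$ (r,j) = 1 \<longleftrightarrow> b)"
proof -
  have entries: "col P l $ r \<in> {0,1}" if "l < k" "r < m" for l r
    using assms(1,2) that by (auto simp: zero_one_mat_def)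
  have cols: "col P j \<in> carrier_vec m" "col P i \<in> carrier_vec m" using P by auto
  show ?thesis
  proof (cases b)
    case True
    obtain r where "r < m" "col P i $ r = 1" "col P j $ r = 1"
      using zero_one_scalar_prod_pos_witness[OF cols(1) entries[OF i] entries[OF j]
          acute_simplex_col_scalar_prod(1)[OF P acute i j]] by blast
    with True P i j show ?thesis by auto
  next
    case False
    obtain r where "r < m" "col P i $ r = 1" "col P j $ r = 0"
      using zero_one_scalar_prod_less_witness[OF cols(2) entries[OF j] entries[OF i]
          acute_simplex_col_scalar_prod(2)[OF P acute j i]] \<open>i \<noteq> j\<close> by blast
    with False P i j show ?thesis by auto
  qed
qed

lemma hessenberg_pattern_last_column:
  fixes h :: "nat \<Rightarrow> nat \<Rightarrow> bool"
  assumes hess: "\<And>r j. j < N \<Longrightarrow> h r j \<Longrightarrow> r \<le> Suc j"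
    and cols: "\<And>i j b. i < j \<Longrightarrow> j \<le> N \<Longrightarrow> \<exists>r. h r i \<and> (h r j \<longleftrightarrow> b)"
    and "j < N" "u \<le> j"
  shows "h u j \<longleftrightarrow> h u N \<noteq> h (Suc j) N"
  using assms(3,4)
proof (induction j arbitrary: u rule: less_induct)
  case (less j)
  note earlier_columns = less.IH
  \<comment> \<open>Column \<open>j\<close> on rows \<open>\<le> j\<close> agrees with \<open>e\<close>: the last column up to complementation,
    normalised at row \<open>0\<close>.\<close>
  define e where "e v \<longleftrightarrow> (h 0 j \<longleftrightarrow> h v N = h 0 N)" for v
  have col_j: "h v j \<longleftrightarrow> e v" if "v \<le> j" for v
    using that
  proof (induction v rule: less_induct)
    case (less v)
    show ?case
    proof (cases v)
      case 0
      then show ?thesis by (simp add: e_def)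
    next
      case (Suc m)
      with less.prems have "m < j" by simp
      obtain r where r: "h r m" "h r j \<longleftrightarrow> e v"
        using cols[of m j "e v"] \<open>m < j\<close> \<open>j < N\<close> by auto
      have "r = v"
      proof (rule ccontr)
        assume "r \<noteq> v"
        moreover have "r \<le> v"
          using hess[of m r] r(1) \<open>m < j\<close> \<open>j < N\<close> Suc by simp
        ultimately have "r < v" by simp
        then have "h r j \<longleftrightarrow> e r" using less.IH[of r] less.prems by simp
        with r(2) have "h r N = h v N" unfolding e_def by blast
        moreover have "h r m \<longleftrightarrow> h r N \<noteq> h v N"
          using earlier_columns[of m r] \<open>m < j\<close> \<open>j < N\<close> \<open>r < v\<close> Suc by simp
        ultimately show False using r(1) by simp
      qed
      with r show ?thesis by simp
    qed
  qed
  have "\<not> e (Suc j)"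
  proof
    assume "e (Suc j)"
    have "h r N = h (Suc j) N" if "h r j" for r
    proof (cases "r = Suc j")
      case False
      with hess[OF \<open>j < N\<close> that] have "r \<le> j" by simp
      with col_j that have "e r" by simp
      with \<open>e (Suc j)\<close> show ?thesis unfolding e_def by blast
    qed simp
    moreover obtain r1 r2 where "h r1 j" "h r1 N" "h r2 j" "\<not> h r2 N"
      using cols[of j N True] cols[of j N False] \<open>j < N\<close> by auto
    ultimately show False by blast
  qed
  with col_j[OF \<open>u \<le> j\<close>] show ?case unfolding e_def by blast
qed

lemma acute_hessenberg_last_column:
  assumes A: "A \<in> carrier_mat m k" and "zero_one_mat A" and hess: "unreduced_upper_hessenberg A"
    and "acute_simplex A" and "0 < k" and i: "0 < i" "i < m"
  shows "A $$ (i, k - 1) = 1 \<longleftrightarrow>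
           (if i < k then (A $$ (0, i - 1) = 1 \<longleftrightarrow> A $$ (0, k - 1) \<noteq> 1) else i = k)"
proof (cases "i < k")
  case True
  define h where "h r j \<longleftrightarrow> r < m \<and> A $$ (r,j) = 1" for r j
  have "r \<le> Suc j" if "j < k - 1" "h r j" for r j
  proof (rule ccontr)
    assume "\<not> r \<le> Suc j"
    with hess A that have "A $$ (r,j) = 0"
      unfolding unreduced_upper_hessenberg_def h_def by auto
    with that(2) show False by (simp add: h_def)
  qed
  moreover have "\<exists>r. h r j \<and> (h r l \<longleftrightarrow> b)" if "j < l" "l \<le> k - 1" for j l b
  proof -
    from that True have "l < k" by simp
    with acute_zero_one_columns_overlap[OF A assms(2,4), of j l b] \<open>j < l\<close>
    show ?thesis unfolding h_def by auto
  qed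
  ultimately have "h 0 (i - 1) \<longleftrightarrow> h 0 (k - 1) \<noteq> h i (k - 1)"
    using hessenberg_pattern_last_column[of "k - 1" h "i - 1" 0] True i by simp
  with True i show ?thesis unfolding h_def by auto
next
  case False
  show ?thesis
  proof (cases "i = k")
    case True
    have subdiag: "\<forall>j<k. j + 1 < m \<longrightarrow> A $$ (j + 1, j) \<noteq> 0"
      using hess A unfolding unreduced_upper_hessenberg_def by auto
    have "k - 1 < k" "k - 1 + 1 = i" using i True by auto
    with subdiag i have "A $$ (i, k - 1) \<noteq> 0" by fastforce
    moreover have "A $$ (i, k - 1) = 0 \<or> A $$ (i, k - 1) = 1"
      using assms(2) A i \<open>k - 1 < k\<close> unfolding zero_one_mat_def by auto
    ultimately show ?thesis using True by simp
  next
    case False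
    with \<open>\<not> i < k\<close> \<open>0 < k\<close> hess A i have "A $$ (i, k - 1) = 0"
      unfolding unreduced_upper_hessenberg_def by auto
    with False \<open>\<not> i < k\<close> show ?thesis by simp
  qed
qed

lemma acute_hessenberg_eqI:
  assumes A: "A \<in> carrier_mat m k" "zero_one_mat A" "unreduced_upper_hessenberg A" "acute_simplex A"
    and B: "B \<in> carrier_mat m k" "zero_one_mat B" "unreduced_upper_hessenberg B" "acute_simplex B"
    and first_cols: "\<And>i j. i < m \<Longrightarrow> j < k - 1 \<Longrightarrow> A $$ (i,j) = B $$ (i,j)"
    and corner: "A $$ (0, k - 1) = 1 \<longleftrightarrow> B $$ (0, k - 1) = 1"
  shows "A = B"
proof (rule eq_matI)
  fix i j assume "i < dim_row B" "j < dim_col B"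
  with B(1) have i: "i < m" and j: "j < k" by auto
  have "A $$ (i,j) = 1 \<longleftrightarrow> B $$ (i,j) = 1"
  proof (cases "j < k - 1")
    case True
    with first_cols i show ?thesis by simp
  next
    case False
    with j have "j = k - 1" "0 < k" by auto
    moreover have "A $$ (i, k - 1) = 1 \<longleftrightarrow> B $$ (i, k - 1) = 1"
    proof (cases "i = 0")
      case False
      then have "A $$ (0, i - 1) = B $$ (0, i - 1)" if "i < k"
        using first_cols[of 0 "i - 1"] i that by simp
      with False i corner \<open>0 < k\<close>
        acute_hessenberg_last_column[OF A \<open>0 < k\<close>, of i] acute_hessenberg_last_column[OF B \<open>0 < k\<close>, of i]
      show ?thesis by (cases "i < k") simp_all
    qed (use corner in simp)
    ultimately show ?thesis by simp
  qed
  moreover have "A $$ (i,j) \<in> {0,1}" "B $$ (i,j) \<in> {0,1}"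
    using A(1,2) B(1,2) i j unfolding zero_one_mat_def by auto
  ultimately show "A $$ (i,j) = B $$ (i,j)" by auto
qed (use A(1) B(1) in auto)

theorem lemma6p6:
  fixes H :: "real mat" and n :: nat
  assumes "H \<in> carrier_mat n (n - 1)"
    and "zero_one_mat H"
    and "unreduced_upper_hessenberg H"
    and "acute_simplex H"
  shows "finite {A \<in> carrier_mat (n+1) n. zero_one_mat A \<and> unreduced_upper_hessenberg A
                   \<and> acute_simplex A \<and> (\<forall>i < n. \<forall>j < n - 1. A $$ (i,j) = H $$ (i,j))}
       \<and> card {A \<in> carrier_mat (n+1) n. zero_one_mat A \<and> unreduced_upper_hessenberg A
                   \<and> acute_simplex A \<and> (\<forall>i < n. \<forall>j < n - 1. A $$ (i,j) = H $$ (i,j))} \<le> 2"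
proof -
  define S where "S = {A \<in> carrier_mat (n+1) n. zero_one_mat A \<and> unreduced_upper_hessenberg A
                   \<and> acute_simplex A \<and> (\<forall>i < n. \<forall>j < n - 1. A $$ (i,j) = H $$ (i,j))}"
  define corner where "corner A \<longleftrightarrow> A $$ (0, n - 1) = 1" for A :: "real mat"
  have bottom_row: "A $$ (n, j) = 0" if "A \<in> S" "j < n - 1" for A j
    using that unfolding S_def unreduced_upper_hessenberg_def by auto
  have inj: "inj_on corner S"
  proof (rule inj_onI)
    fix A B assume "A \<in> S" "B \<in> S" "corner A = corner B"
    moreover have "A $$ (i,j) = B $$ (i,j)" if "i < n + 1" "j < n - 1" for i j
      using \<open>A \<in> S\<close> \<open>B \<in> S\<close> bottom_row that less_Suc_eq unfolding S_def by fastforce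
    ultimately show "A = B"
      using acute_hessenberg_eqI[of A "n + 1" n B] unfolding S_def corner_def by auto
  qed
  have "finite S" using finite_imageD[OF finite inj] .
  moreover have "card S \<le> card (UNIV :: bool set)" using card_inj_on_le[OF inj subset_UNIV] by simp
  ultimately show ?thesis unfolding S_def by simp
qed

end
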